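(* Let $L$ be a non-abelian nilpotent Lie ring additively isomorphic to $\mathbb{Z}^h$, of nilpotency class $c$. Then (1) $\alpha_L^{\leq}\le h-\frac12$ if $c=2$, and $\alpha_L^{\leq}\le h-\frac{1}{c-1}$ if $c>2$; (2) $\alpha_L^{\lhd}\le h-1$.
   Context: For a Lie ring $L$ additively isomorphic to $\mathbb{Z}^h$, $a_n^{\leq}(L)$ (resp. $a_n^{\lhd}(L)$) is the number of Lie subrings (resp. ideals) of additive index $n$, and $\alpha_L^*$ is the abscissa of convergence of $\zeta_L^*(s)=\sum_n a_n^*(L)n^{-s}$, $*\in\{\leq,\lhd\}$. *)

theory Defs
  imports "HOL-Analysis.Analysis" "HOL-Library.Extended_Real"
begin

text \<open>A Lie ring additively isomorphic to Z^h is modelled as the additive group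
  int^'n (h = CARD('n)) together with a Lie bracket B.\<close>

definition lie_ring :: "(int^'n \<Rightarrow> int^'n \<Rightarrow> int^'n) \<Rightarrow> bool" where
  "lie_ring B \<longleftrightarrow>
     (\<forall>x y z. B (x + y) z = B x z + B y z) \<and>
     (\<forall>x y z. B x (y + z) = B x y + B x z) \<and>
     (\<forall>x. B x x = 0) \<and>
     (\<forall>x y z. B x (B y z) + B y (B z x) + B z (B x y) = 0)"

definition add_subgroup :: "('a::ab_group_add) set \<Rightarrow> bool" where
  "add_subgroup M \<longleftrightarrow> 0 \<in> M \<and> (\<forall>x\<in>M. \<forall>y\<in>M. x + y \<in> M) \<and> (\<forall>x\<in>M. - x \<in> M)"

definition add_span :: "('a::ab_group_add) set \<Rightarrow> 'a set" where
  "add_span S = \<Inter> {M. add_subgroup M \<and> S \<subseteq> M}"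

text \<open>Additive index (number of cosets; 0 if infinite).\<close>
definition add_index :: "('a::ab_group_add) set \<Rightarrow> nat" where
  "add_index M = card {(\<lambda>m. x + m) ` M | x. True}"

definition lie_subring :: "(int^'n \<Rightarrow> int^'n \<Rightarrow> int^'n) \<Rightarrow> (int^'n) set \<Rightarrow> bool" where
  "lie_subring B M \<longleftrightarrow> add_subgroup M \<and> (\<forall>x\<in>M. \<forall>y\<in>M. B x y \<in> M)"

definition lie_ideal :: "(int^'n \<Rightarrow> int^'n \<Rightarrow> int^'n) \<Rightarrow> (int^'n) set \<Rightarrow> bool" where
  "lie_ideal B M \<longleftrightarrow> add_subgroup M \<and> (\<forall>x. \<forall>y\<in>M. B x y \<in> M)"

text \<open>Lower central series: lcs B 0 = L = gamma_1, lcs B (Suc i) = [L, lcs B i].\<close>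
fun lcs :: "(int^'n \<Rightarrow> int^'n \<Rightarrow> int^'n) \<Rightarrow> nat \<Rightarrow> (int^'n) set" where
  "lcs B 0 = UNIV"
| "lcs B (Suc i) = add_span {B x y | x y. y \<in> lcs B i}"

text \<open>Nilpotent of class c: gamma_{c+1} = 0 but gamma_c \<noteq> 0.\<close>
definition nilpotent_class :: "(int^'n \<Rightarrow> int^'n \<Rightarrow> int^'n) \<Rightarrow> nat \<Rightarrow> bool" where
  "nilpotent_class B c \<longleftrightarrow> lcs B c = {0} \<and> lcs B (c - 1) \<noteq> {0}"

definition abelian_lie :: "(int^'n \<Rightarrow> int^'n \<Rightarrow> int^'n) \<Rightarrow> bool" where
  "abelian_lie B \<longleftrightarrow> (\<forall>x y. B x y = 0)"

definition num_subrings :: "(int^'n \<Rightarrow> int^'n \<Rightarrow> int^'n) \<Rightarrow> nat \<Rightarrow> nat" where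
  "num_subrings B n = card {M. lie_subring B M \<and> add_index M = n}"

definition num_ideals :: "(int^'n \<Rightarrow> int^'n \<Rightarrow> int^'n) \<Rightarrow> nat \<Rightarrow> nat" where
  "num_ideals B n = card {M. lie_ideal B M \<and> add_index M = n}"

definition abscissa :: "(nat \<Rightarrow> nat) \<Rightarrow> ereal" where
  "abscissa a = Inf {ereal s | s. summable (\<lambda>n. real (a (Suc n)) / real (Suc n) powr s)}"

end

theory Submission
  imports Defs
begin

text \<open>
  A non-abelian nilpotent Lie ring contains a nonzero central bracket \<open>z = [x, y]\<close>: take \<open>y\<close> in
  the last nonzero term of the lower central series. A unimodular change of basis, built from
  the Euclidean algorithm, moves \<open>z\<close> onto an axis \<open>e\<^sub>a\<close>, \<open>x\<close> into \<open>\<langle>e\<^sub>a, e\<^sub>b\<rangle>\<close> and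
  \<open>y\<close> into \<open>\<langle>e\<^sub>a, e\<^sub>b, e\<^sub>c\<rangle>\<close>; then \<open>e\<^sub>a\<close> is central and \<open>[e\<^sub>b, e\<^sub>c] = \<tau> e\<^sub>a\<close> with \<open>\<tau> \<noteq> 0\<close>.

  A sublattice of finite index is described along the flag
  \<open>\<langle>e\<^sub>a\<rangle> \<subset> \<langle>e\<^sub>a, e\<^sub>b\<rangle> \<subset> \<langle>e\<^sub>a, e\<^sub>b, e\<^sub>c\<rangle> \<subset> \<dots>\<close> by the pivots of its Hermite normal form.
  Its index is the product of the pivots, and it is determined by its slice in the smaller
  coordinate subspace, its last pivot \<open>d\<close> and one coset of the slice. Hence adjoining a
  coordinate turns a bound on the Dirichlet series \<open>\<Sum>\<^sub>M [\<int>\<^sup>J : M]\<^sup>-\<^sup>s\<close> at \<open>s - 1\<close> into one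
  at \<open>s\<close>, at the cost of a factor \<open>\<zeta>(s)\<close>.

  In \<open>\<langle>e\<^sub>a, e\<^sub>b, e\<^sub>c\<rangle>\<close> there are at most \<open>d\<^sub>a\<^sup>2 d\<^sub>b\<close> lattices with pivots
  \<open>(d\<^sub>a, d\<^sub>b, d\<^sub>c)\<close>. Closure under the bracket forces \<open>d\<^sub>a | \<tau> d\<^sub>b d\<^sub>c\<close> for subrings and
  \<open>d\<^sub>a | \<tau> d\<^sub>c\<close> for ideals, so \<open>\<Sum> d\<^sub>a\<^sup>2 d\<^sub>b (d\<^sub>a d\<^sub>b d\<^sub>c)\<^sup>-\<^sup>s\<close> converges for \<open>s > 5/2\<close>,
  respectively \<open>s > 2\<close>. The remaining \<open>h - 3\<close> coordinates shift these abscissae to \<open>h - 1/2\<close>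
  and \<open>h - 1\<close>. As \<open>h - 1/2 \<le> h - 1/(c - 1)\<close> for \<open>c \<ge> 3\<close>, the subring bound holds in every class.
\<close>

lemma add_subgroup_diff:
  "add_subgroup M \<Longrightarrow> x \<in> M \<Longrightarrow> y \<in> M \<Longrightarrow> x - y \<in> M"
  unfolding add_subgroup_def by (metis diff_conv_add_uminus)

lemma add_subgroup_Int: "add_subgroup M \<Longrightarrow> add_subgroup N \<Longrightarrow> add_subgroup (M \<inter> N)"
  by (auto simp: add_subgroup_def)

lemma add_subgroup_smult:
  fixes x :: "int^'n"
  assumes M: "add_subgroup M" and x: "x \<in> M"
  shows "k *s x \<in> M"
proof -
  have nat: "int n *s x \<in> M" for n
    by (induction n) (use M x in \<open>auto simp: add_subgroup_def vector_sadd_rdistrib\<close>)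
  show ?thesis
  proof (cases k rule: int_cases)
    case (neg n)
    then have "k *s x = - (int (Suc n) *s x)" by (simp add: vec_eq_iff)
    then show ?thesis using nat[of "Suc n"] M by (metis add_subgroup_def)
  qed (use nat in simp)
qed

lemma add_subgroup_coset_eq_iff:
  assumes "add_subgroup M"
  shows "(\<lambda>m. x + m) ` M = (\<lambda>m. y + m) ` M \<longleftrightarrow> x - y \<in> M"
proof
  assume eq: "(\<lambda>m. x + m) ` M = (\<lambda>m. y + m) ` M"
  have "x \<in> (\<lambda>m. x + m) ` M" using assms by (force simp: add_subgroup_def)
  then show "x - y \<in> M" unfolding eq by auto
next
  assume xy: "x - y \<in> M"
  have "x + m \<in> (\<lambda>m. y + m) ` M" "y + m \<in> (\<lambda>m. x + m) ` M" if "m \<in> M" for m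
  proof -
    have "(x - y) + m \<in> M" "m - (x - y) \<in> M"
      using assms xy that by (auto simp: add_subgroup_def add_subgroup_diff)
    then show "x + m \<in> (\<lambda>m. y + m) ` M" "y + m \<in> (\<lambda>m. x + m) ` M"
      by (force simp: image_iff)+
  qed
  then show "(\<lambda>m. x + m) ` M = (\<lambda>m. y + m) ` M" by blast
qed

lemma additive_smult:
  fixes f :: "int^'m \<Rightarrow> int^'n"
  assumes "Modules.additive f"
  shows "f (k *s x) = k *s f x"
proof -
  have nat: "f (int n *s x) = int n *s f x" for n
    by (induction n) (simp_all add: additive.zero[OF assms] additive.add[OF assms] vector_sadd_rdistrib)
  show ?thesis
  proof (cases k rule: int_cases)
    case (neg n)
    have "\<And>v :: int^'l. k *s v = - (int (Suc n) *s v)" using neg by (simp add: vec_eq_iff)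
    then show ?thesis using nat additive.minus[OF assms] by metis
  qed (use nat in simp)
qed

lemma additive_comp: "Modules.additive f \<Longrightarrow> Modules.additive g \<Longrightarrow> Modules.additive (f \<circ> g)"
  by (simp add: Modules.additive_def)

lemma additive_inv:
  assumes "bij f" "Modules.additive f"
  shows "Modules.additive (inv f)"
proof
  fix x y
  have "f (inv f x + inv f y) = x + y"
    using assms by (simp add: additive.add bij_is_surj surj_f_inv_f)
  then show "inv f (x + y) = inv f x + inv f y"
    using assms(1) by (metis bij_inv_eq_iff)
qed

definition biadditive :: "('a::ab_group_add \<Rightarrow> 'b::ab_group_add \<Rightarrow> 'c::ab_group_add) \<Rightarrow> bool" where
  "biadditive B \<longleftrightarrow> (\<forall>x. Modules.additive (B x)) \<and> (\<forall>y. Modules.additive (\<lambda>x. B x y))"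

definition alternating :: "('a \<Rightarrow> 'a \<Rightarrow> 'b::zero) \<Rightarrow> bool" where
  "alternating B \<longleftrightarrow> (\<forall>x. B x x = 0)"

definition center :: "('a \<Rightarrow> 'a \<Rightarrow> 'b::zero) \<Rightarrow> 'a set" where
  "center B = {z. \<forall>v. B z v = 0 \<and> B v z = 0}"

lemma lie_ring_biadditive: "lie_ring B \<Longrightarrow> biadditive B"
  by (simp add: lie_ring_def biadditive_def Modules.additive_def)

lemma lie_ring_alternating: "lie_ring B \<Longrightarrow> alternating B"
  by (simp add: lie_ring_def alternating_def)

context
  fixes B :: "'a::ab_group_add \<Rightarrow> 'a \<Rightarrow> 'b::ab_group_add"
  assumes B: "biadditive B"
begin

lemma biadditive_add_left: "B (x + y) z = B x z + B y z"
  using B additive.add[of "\<lambda>x. B x z"] by (simp add: biadditive_def)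

lemma biadditive_add_right: "B x (y + z) = B x y + B x z"
  using B additive.add[of "B x"] by (simp add: biadditive_def)

lemma biadditive_diff_left: "B (x - y) z = B x z - B y z"
  using B additive.diff[of "\<lambda>x. B x z"] by (simp add: biadditive_def)

lemma alternating_anticomm: "alternating B \<Longrightarrow> B y x = - B x y"
  using biadditive_add_left[of x y "x + y"]
  by (simp add: alternating_def biadditive_add_right eq_neg_iff_add_eq_0 add.commute)

end

lemma biadditive_smult_left:
  fixes B :: "int^'m \<Rightarrow> int^'m \<Rightarrow> int^'n"
  shows "biadditive B \<Longrightarrow> B (k *s x) y = k *s B x y"
  using additive_smult[of "\<lambda>x. B x y"] by (simp add: biadditive_def)

lemma biadditive_smult_right:
  fixes B :: "int^'m \<Rightarrow> int^'m \<Rightarrow> int^'n"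
  shows "biadditive B \<Longrightarrow> B x (k *s y) = k *s B x y"
  using additive_smult[of "B x"] by (simp add: biadditive_def)

lemma center_smult:
  fixes B :: "int^'m \<Rightarrow> int^'m \<Rightarrow> int^'n"
  shows "biadditive B \<Longrightarrow> z \<in> center B \<Longrightarrow> k *s z \<in> center B"
  by (simp add: center_def biadditive_smult_left biadditive_smult_right)

lemma center_smult_cancel:
  fixes B :: "int^'m \<Rightarrow> int^'m \<Rightarrow> int^'n"
  assumes "biadditive B" "k \<noteq> 0" "k *s z \<in> center B"
  shows "z \<in> center B"
  using assms by (auto simp: center_def biadditive_smult_left biadditive_smult_right vec_eq_iff)

lemma nilpotent_central_bracket:
  fixes B :: "int^'n \<Rightarrow> int^'n \<Rightarrow> int^'n"
  assumes L: "lie_ring B" and "\<not> abelian_lie B" and "nilpotent_class B c"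
  shows "\<exists>x y. B x y \<noteq> 0 \<and> B x y \<in> center B"
proof -
  have lcs: "lcs B c = {0}" "lcs B (c - 1) \<noteq> {0}"
    using assms(3) by (auto simp: nilpotent_class_def)
  have span_sub: "S \<subseteq> add_span S" for S :: "(int^'n) set" by (auto simp: add_span_def)
  have "lcs B 1 \<noteq> {0}"
  proof
    assume "lcs B 1 = {0}"
    then have "B x y = 0" for x y using span_sub[of "{B x y |x y. y \<in> UNIV}"] by auto
    then show False using assms(2) by (simp add: abelian_lie_def)
  qed
  moreover have "c \<noteq> 0"
    using lcs(1) by (metis axis_eq_0_iff lcs.simps(1) one_neq_zero singletonD UNIV_I)
  ultimately obtain k where k: "c = Suc (Suc k)"
    using lcs by (metis One_nat_def diff_Suc_1 not0_implies_Suc)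
  have "\<exists>x y. y \<in> lcs B k \<and> B x y \<noteq> 0"
  proof (rule ccontr)
    assume "\<not> ?thesis"
    then have "add_span {B x y |x y. y \<in> lcs B k} \<subseteq> {0}"
      by (auto simp: add_span_def add_subgroup_def)
    then show False using lcs(2) k span_sub[of "{0}"] by (auto simp: add_span_def add_subgroup_def)
  qed
  then obtain x y where xy: "y \<in> lcs B k" "B x y \<noteq> 0" by blast
  then have "B x y \<in> lcs B (Suc k)" using span_sub by fastforce
  then have "B u (B x y) \<in> lcs B c" for u using k span_sub by fastforce
  then have "B u (B x y) = 0" "B (B x y) u = 0" for u
    using lcs(1) alternating_anticomm[OF lie_ring_biadditive[OF L] lie_ring_alternating[OF L]]
    by (metis neg_equal_0_iff_equal singletonD)+
  then show ?thesis using xy by (auto simp: center_def)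
qed

section \<open>Transport of structure along additive automorphisms\<close>

definition push_bracket :: "('a \<Rightarrow> 'b) \<Rightarrow> ('a \<Rightarrow> 'a \<Rightarrow> 'a) \<Rightarrow> 'b \<Rightarrow> 'b \<Rightarrow> 'b" where
  "push_bracket T B u v = T (B (inv T u) (inv T v))"

lemma push_bracket_apply: "inj T \<Longrightarrow> push_bracket T B (T x) (T y) = T (B x y)"
  by (simp add: push_bracket_def)

lemma push_bracket_comp:
  "bij S \<Longrightarrow> bij T \<Longrightarrow> push_bracket (S \<circ> T) B = push_bracket S (push_bracket T B)"
  by (simp add: push_bracket_def fun_eq_iff o_inv_distrib bij_is_inj)

lemma push_bracket_inv: "bij T \<Longrightarrow> push_bracket (inv T) (push_bracket T B) = B"
  by (simp add: push_bracket_def fun_eq_iff inv_inv_eq bij_is_inj)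

context
  fixes T :: "'a::ab_group_add \<Rightarrow> 'b::ab_group_add"
  assumes T: "bij T" "Modules.additive T"
begin

lemma biadditive_push_bracket:
  assumes "biadditive B"
  shows "biadditive (push_bracket T B)"
  unfolding biadditive_def Modules.additive_def push_bracket_def
  by (simp add: additive.add[OF additive_inv[OF T]] additive.add[OF T(2)]
      biadditive_add_left[OF assms] biadditive_add_right[OF assms])

lemma alternating_push_bracket: "alternating B \<Longrightarrow> alternating (push_bracket T B)"
  by (simp add: alternating_def push_bracket_def additive.zero[OF T(2)])

lemma center_push_bracket: "z \<in> center B \<Longrightarrow> T z \<in> center (push_bracket T B)"
  using T by (simp add: center_def push_bracket_def additive.zero bij_is_inj)

lemma add_subgroup_image:
  assumes M: "add_subgroup M"
  shows "add_subgroup (T ` M)"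
  unfolding add_subgroup_def
proof (intro conjI ballI)
  show "0 \<in> T ` M" using M additive.zero[OF T(2)] by (metis add_subgroup_def image_eqI)
  fix u v assume "u \<in> T ` M" "v \<in> T ` M"
  then obtain x y where "x \<in> M" "y \<in> M" "u = T x" "v = T y" by blast
  then show "u + v \<in> T ` M" "- u \<in> T ` M"
    using M by (auto simp: add_subgroup_def simp flip: additive.add[OF T(2)] additive.minus[OF T(2)])
qed

lemma add_index_image: "add_index (T ` M) = add_index M"
proof -
  have coset: "T ` ((\<lambda>m. x + m) ` M) = (\<lambda>m. T x + m) ` (T ` M)" for x
    by (auto simp: image_iff additive.add[OF T(2)])
  have "(\<lambda>C. T ` C) ` range (\<lambda>x. (\<lambda>m. x + m) ` M) = (\<lambda>y. (\<lambda>m. y + m) ` T ` M) ` range T"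
    by (simp add: image_image coset additive.add[OF T(2)])
  then have "{(\<lambda>m. x + m) ` T ` M |x. True} = (\<lambda>C. T ` C) ` {(\<lambda>m. x + m) ` M |x. True}"
    using bij_is_surj[OF T(1)] by (simp add: full_SetCompr_eq)
  moreover have "inj_on (\<lambda>C. T ` C) X" for X
    by (simp add: inj_on_def inj_image_eq_iff[OF bij_is_inj[OF T(1)]])
  ultimately show ?thesis by (simp add: add_index_def card_image)
qed

end

context
  fixes T :: "int^'n \<Rightarrow> int^'n"
  assumes T: "bij T" "Modules.additive T"
begin

lemma lie_subring_image: "lie_subring B M \<Longrightarrow> lie_subring (push_bracket T B) (T ` M)"
  using T by (auto simp: lie_subring_def add_subgroup_image[OF T] push_bracket_apply bij_is_inj)

lemma lie_ideal_image:
  assumes "lie_ideal B M"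
  shows "lie_ideal (push_bracket T B) (T ` M)"
proof -
  have "T (inv T x) = x" for x using T by (simp add: bij_is_surj surj_f_inv_f)
  then show ?thesis
    using assms T by (auto simp: lie_ideal_def add_subgroup_image[OF T] push_bracket_def bij_is_inj)
qed

lemma card_push_bracket_invariant:
  fixes P :: "(int^'n \<Rightarrow> int^'n \<Rightarrow> int^'n) \<Rightarrow> (int^'n) set \<Rightarrow> bool"
  assumes P: "\<And>T B M. bij T \<Longrightarrow> Modules.additive T \<Longrightarrow> P B M \<Longrightarrow> P (push_bracket T B) (T ` M)"
  shows "card {M. P (push_bracket T B) M \<and> add_index M = n} = card {M. P B M \<and> add_index M = n}"
proof -
  have Tinv: "bij (inv T)" "Modules.additive (inv T)" using T by (simp_all add: bij_imp_bij_inv additive_inv)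
  have "{M. P (push_bracket T B) M \<and> add_index M = n} = (\<lambda>M. T ` M) ` {M. P B M \<and> add_index M = n}"
  proof (intro equalityI subsetI)
    fix M assume "M \<in> {M. P (push_bracket T B) M \<and> add_index M = n}"
    then have "P B (inv T ` M)" "add_index (inv T ` M) = n"
      using P[OF Tinv, of "push_bracket T B" M] push_bracket_inv[OF T(1)] add_index_image[OF Tinv]
      by auto
    moreover have "M = T ` inv T ` M" by (simp add: image_comp surj_f_inv_f[OF bij_is_surj[OF T(1)]])
    ultimately show "M \<in> (\<lambda>M. T ` M) ` {M. P B M \<and> add_index M = n}" by blast
  next
    fix M' assume "M' \<in> (\<lambda>M. T ` M) ` {M. P B M \<and> add_index M = n}"
    then obtain M where "M' = T ` M" "P B M" "add_index M = n" by blast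
    then show "M' \<in> {M. P (push_bracket T B) M \<and> add_index M = n}"
      using P[OF T] add_index_image[OF T] by simp
  qed
  moreover have "inj_on (\<lambda>M. T ` M) X" for X
    by (simp add: inj_on_def inj_image_eq_iff[OF bij_is_inj[OF T(1)]])
  ultimately show ?thesis by (simp add: card_image)
qed

end

lemma num_subrings_push_bracket:
  fixes T :: "int^'n \<Rightarrow> int^'n"
  assumes "bij T" "Modules.additive T"
  shows "num_subrings (push_bracket T B) = num_subrings B"
  using card_push_bracket_invariant[where P = lie_subring, OF assms lie_subring_image]
  by (simp add: num_subrings_def fun_eq_iff)

lemma num_ideals_push_bracket:
  fixes T :: "int^'n \<Rightarrow> int^'n"
  assumes "bij T" "Modules.additive T"
  shows "num_ideals (push_bracket T B) = num_ideals B"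
  using card_push_bracket_invariant[where P = lie_ideal, OF assms lie_ideal_image]
  by (simp add: num_ideals_def fun_eq_iff)

definition coord_subspace :: "'n set \<Rightarrow> (int^'n) set" where
  "coord_subspace J = {v. \<forall>i. i \<notin> J \<longrightarrow> v$i = 0}"

lemma coord_subspace_UNIV [simp]: "coord_subspace UNIV = UNIV"
  by (simp add: coord_subspace_def)

lemma coord_subspace_empty [simp]: "coord_subspace {} = {0}"
  by (auto simp: coord_subspace_def vec_eq_iff)

lemma coord_subspace_mono: "J \<subseteq> K \<Longrightarrow> coord_subspace J \<subseteq> coord_subspace K"
  by (auto simp: coord_subspace_def)

lemma Int_coord_subspace_subset:
  "J \<subseteq> K \<Longrightarrow> M \<inter> coord_subspace K \<inter> coord_subspace J = M \<inter> coord_subspace J"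
  using coord_subspace_mono by blast

lemma add_subgroup_coord_subspace: "add_subgroup (coord_subspace J)"
  by (auto simp: add_subgroup_def coord_subspace_def)

lemma coord_subspace_diff:
  "u \<in> coord_subspace J \<Longrightarrow> v \<in> coord_subspace J \<Longrightarrow> u - v \<in> coord_subspace J"
  by (simp add: add_subgroup_diff add_subgroup_coord_subspace)

lemma axis_in_coord_subspace: "j \<in> J \<Longrightarrow> axis j k \<in> coord_subspace J"
  by (simp add: coord_subspace_def axis_def)

lemma coord_subspace_insertD: "v \<in> coord_subspace (insert j J) \<Longrightarrow> v - axis j (v$j) \<in> coord_subspace J"
  by (simp add: coord_subspace_def axis_def)

lemma coord_subspace_insert_nth_zero:
  "v \<in> coord_subspace (insert j J) \<Longrightarrow> v$j = 0 \<Longrightarrow> v \<in> coord_subspace J"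
  by (auto simp: coord_subspace_def)

lemma coord_subspace_singletonD: "v \<in> coord_subspace {j} \<Longrightarrow> v = axis j (v$j)"
  by (auto simp: coord_subspace_def axis_def vec_eq_iff)

lemma axis_eq_smult: "axis j k = k *s axis j (1::int)"
  by (simp add: axis_def vec_eq_iff)

lemma bracket_coord_flag:
  fixes B :: "int^'n \<Rightarrow> int^'n \<Rightarrow> int^'n"
  assumes B: "biadditive B" "alternating B" and a: "axis a 1 \<in> center B"
    and u: "u \<in> coord_subspace {a, b}" and v: "v \<in> coord_subspace {a, b, c}"
  shows "B u v = (u$b * v$c) *s B (axis b 1) (axis c 1)"
proof -
  have central: "w \<in> coord_subspace {a} \<Longrightarrow> w \<in> center B" for w
    using center_smult[OF B(1) a] coord_subspace_singletonD axis_eq_smult by metis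
  define v' where "v' = v - axis c (v$c)"
  have v': "v' \<in> coord_subspace (insert b {a})"
    using coord_subspace_insertD[of v c "{a, b}"] v by (simp add: v'_def insert_commute)
  have u': "u - axis b (u$b) \<in> center B" "v' - axis b (v'$b) \<in> center B"
    using central coord_subspace_insertD[of u b "{a}"] coord_subspace_insertD[OF v'] u
    by (simp_all add: insert_commute)
  have "B u v = B (axis b (u$b)) v"
    using u'(1) biadditive_diff_left[OF B(1), of u "axis b (u$b)" v] by (simp add: center_def)
  also have "\<dots> = B (axis b (u$b)) (v' - axis b (v'$b)) + B (axis b (u$b)) (axis b (v'$b))
      + B (axis b (u$b)) (axis c (v$c))"
    by (simp add: v'_def flip: biadditive_add_right[OF B(1)])
  also have "\<dots> = (u$b * v$c) *s B (axis b 1) (axis c 1)"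
    using u'(2) B(2)
    by (simp add: center_def alternating_def axis_eq_smult[of _ "u$b"] axis_eq_smult[of _ "v'$b"]
        axis_eq_smult[of _ "v$c"] biadditive_smult_left[OF B(1)] biadditive_smult_right[OF B(1)] mult_ac)
  finally show ?thesis .
qed

section \<open>Reduction by transvections\<close>

definition transvection :: "'n \<Rightarrow> 'n \<Rightarrow> int \<Rightarrow> int^'n \<Rightarrow> int^'n" where
  "transvection i j k v = (\<chi> l. if l = j then v$j + k * v$i else v$l)"

lemma transvection_nth: "transvection i j k v $ l = (if l = j then v$j + k * v$i else v$l)"
  by (simp add: transvection_def)

lemma additive_transvection: "Modules.additive (transvection i j k)"
  by (simp add: Modules.additive_def transvection_def vec_eq_iff algebra_simps)

lemma bij_transvection:
  assumes "i \<noteq> j"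
  shows "bij (transvection i j k)"
proof (rule bij_betw_byWitness[where f' = "transvection i j (-k)"])
  show "\<forall>v\<in>UNIV. transvection i j (- k) (transvection i j k v) = v"
    "\<forall>v\<in>UNIV. transvection i j k (transvection i j (- k) v) = v"
    using assms by (simp_all add: vec_eq_iff transvection_nth)
qed auto

text \<open>One step of the Euclidean algorithm on the coordinates in \<open>J\<close>.\<close>

lemma transvection_reduces:
  assumes ij: "i \<in> J" "j \<in> J" "i \<noteq> j" "v$i \<noteq> 0" "\<bar>v$i\<bar> \<le> \<bar>v$j\<bar>"
  defines "R \<equiv> transvection i j (- sgn (v$i) * sgn (v$j))"
  shows "(\<Sum>l\<in>J. nat \<bar>R v $ l\<bar>) < (\<Sum>l\<in>J. nat \<bar>v$l\<bar>)" "R v $ i \<noteq> 0"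
    "\<forall>u\<in>coord_subspace (- J). R u = u"
proof -
  have "v$j \<noteq> 0" using ij(4,5) by auto
  then have Rj: "\<bar>R v $ j\<bar> = \<bar>v$j\<bar> - \<bar>v$i\<bar>"
    using ij by (auto simp: R_def transvection_nth sgn_if abs_if)
  have Rl: "l \<noteq> j \<Longrightarrow> R v $ l = v$l" for l by (simp add: R_def transvection_nth)
  have "(\<Sum>l\<in>J. nat \<bar>R v $ l\<bar>) = nat \<bar>R v $ j\<bar> + (\<Sum>l\<in>J - {j}. nat \<bar>v$l\<bar>)"
    using ij(2) Rl by (simp add: sum.remove)
  moreover have "(\<Sum>l\<in>J. nat \<bar>v$l\<bar>) = nat \<bar>v$j\<bar> + (\<Sum>l\<in>J - {j}. nat \<bar>v$l\<bar>)"
    using ij(2) by (simp add: sum.remove)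
  ultimately show "(\<Sum>l\<in>J. nat \<bar>R v $ l\<bar>) < (\<Sum>l\<in>J. nat \<bar>v$l\<bar>)"
    using Rj ij(4) by linarith
  show "R v $ i \<noteq> 0" using ij Rl[of i] by metis
  show "\<forall>u\<in>coord_subspace (- J). R u = u"
    using ij by (auto simp: R_def vec_eq_iff transvection_nth coord_subspace_def)
qed

lemma reduce_to_single_coordinate:
  fixes v :: "int^'n"
  assumes "\<exists>i\<in>J. v$i \<noteq> 0"
  shows "\<exists>T c. bij T \<and> Modules.additive T \<and> (\<forall>u\<in>coord_subspace (- J). T u = u) \<and>
    c \<in> J \<and> T v \<in> coord_subspace (insert c (- J)) \<and> T v $ c \<noteq> 0"
  using assms
proof (induction "\<Sum>l\<in>J. nat \<bar>v$l\<bar>" arbitrary: v rule: less_induct)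
  case less
  show ?case
  proof (cases "\<exists>i\<in>J. \<exists>j\<in>J. i \<noteq> j \<and> v$i \<noteq> 0 \<and> v$j \<noteq> 0 \<and> \<bar>v$i\<bar> \<le> \<bar>v$j\<bar>")
    case True
    then obtain i j where ij: "i \<in> J" "j \<in> J" "i \<noteq> j" "v$i \<noteq> 0" "\<bar>v$i\<bar> \<le> \<bar>v$j\<bar>"
      by blast
    define R where "R = transvection i j (- sgn (v$i) * sgn (v$j))"
    obtain T c where T: "bij T" "Modules.additive T" "\<forall>u\<in>coord_subspace (- J). T u = u"
        "c \<in> J" "T (R v) \<in> coord_subspace (insert c (- J))" "T (R v) $ c \<noteq> 0"
      using less.hyps transvection_reduces[OF ij] ij(1) unfolding R_def by blast
    then show ?thesis
      using transvection_reduces(3)[OF ij] ij(3)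
      by (intro exI[of _ "T \<circ> R"] exI[of _ c])
        (auto simp: R_def bij_comp additive_comp additive_transvection bij_transvection)
  next
    case False
    obtain c where c: "c \<in> J" "v$c \<noteq> 0" using less.prems by blast
    have "v$l = 0" if "l \<in> J" "l \<noteq> c" for l
      using False c that by (metis linorder_le_cases)
    then show ?thesis using c
      by (intro exI[of _ id] exI[of _ c]) (auto simp: coord_subspace_def Modules.additive_def)
  qed
qed

locale heisenberg_triple =
  fixes B :: "int^'n \<Rightarrow> int^'n \<Rightarrow> int^'n" and a b c :: 'n and \<tau> :: int
  assumes biadditive: "biadditive B" and alternating: "alternating B"
    and distinct: "a \<noteq> b" "a \<noteq> c" "b \<noteq> c" and tau: "\<tau> \<noteq> 0"
    and central: "axis a 1 \<in> center B" and bracket_bc: "B (axis b 1) (axis c 1) = axis a \<tau>"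
begin

lemma bracket_flag:
  "u \<in> coord_subspace {a, b} \<Longrightarrow> v \<in> coord_subspace {a, b, c} \<Longrightarrow> B u v = axis a (\<tau> * u$b * v$c)"
  using bracket_coord_flag[OF biadditive alternating central] bracket_bc
  by (simp add: axis_def vec_eq_iff mult_ac)

end

lemma push_bracket_central_axis:
  fixes B :: "int^'n \<Rightarrow> int^'n \<Rightarrow> int^'n"
  assumes T: "bij T" "Modules.additive T" "\<forall>u\<in>coord_subspace K. T u = u" "a \<in> K"
    and B: "biadditive B" "alternating B" "axis a 1 \<in> center B" "B x y = axis a t"
  shows "biadditive (push_bracket T B)" "alternating (push_bracket T B)"
    "axis a 1 \<in> center (push_bracket T B)" "push_bracket T B (T x) (T y) = axis a t"
proof -
  have Ta: "T (axis a k) = axis a k" for k using T(3,4) axis_in_coord_subspace by blast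
  show "biadditive (push_bracket T B)" "alternating (push_bracket T B)"
    using biadditive_push_bracket[OF T(1,2) B(1)] alternating_push_bracket[OF T(1,2) B(2)] by auto
  show "axis a 1 \<in> center (push_bracket T B)" using center_push_bracket[OF T(1,2) B(3)] Ta by simp
  show "push_bracket T B (T x) (T y) = axis a t"
    using B(4) Ta by (simp add: push_bracket_apply bij_is_inj T(1))
qed

lemma smult_eq_axisD:
  fixes w :: "int^'n"
  assumes "k *s w = axis a t" "t \<noteq> 0"
  shows "w = axis a (w$a)" "w$a \<noteq> 0"
  using assms by (auto simp: vec_eq_iff axis_def split: if_splits) (metis mult_eq_0_iff)

text \<open>Two further reductions, each fixing the previous coordinates, put \<open>x\<close> into
  \<open>\<langle>e\<^sub>a, e\<^sub>b\<rangle>\<close> and \<open>y\<close> into \<open>\<langle>e\<^sub>a, e\<^sub>b, e\<^sub>c\<rangle>\<close>; \<open>[x, y] \<noteq> 0\<close> rules out the degenerate cases.\<close>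

lemma heisenberg_triple_of_central_axis:
  fixes B :: "int^'n \<Rightarrow> int^'n \<Rightarrow> int^'n"
  assumes B: "biadditive B" "alternating B" "axis a 1 \<in> center B" and xy: "B x y = axis a t" "t \<noteq> 0"
  shows "\<exists>T b c \<tau>. bij T \<and> Modules.additive T \<and> heisenberg_triple (push_bracket T B) a b c \<tau>"
proof -
  have "x \<notin> center B"
  proof
    assume "x \<in> center B"
    then have "B x y = 0" by (simp add: center_def)
    with xy show False by simp
  qed
  then have "x \<notin> coord_subspace {a}"
    using center_smult[OF B(1,3), of "x$a"] coord_subspace_singletonD[of x a] axis_eq_smult[of a "x$a"]
    by auto
  then obtain T2 b where T2: "bij T2" "Modules.additive T2" "\<forall>u\<in>coord_subspace {a}. T2 u = u"
      "b \<noteq> a" "T2 x \<in> coord_subspace {a, b}" "T2 x $ b \<noteq> 0"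
    using reduce_to_single_coordinate[of "- {a}" x] by (auto simp: coord_subspace_def insert_commute)
  define B2 where "B2 = push_bracket T2 B"
  have B2: "biadditive B2" "alternating B2" "axis a 1 \<in> center B2" "B2 (T2 x) (T2 y) = axis a t"
    using push_bracket_central_axis[OF T2(1-3) singletonI B xy(1)] by (simp_all add: B2_def)
  have "T2 y \<notin> coord_subspace {a, b}"
  proof
    assume "T2 y \<in> coord_subspace {a, b}"
    then have "B2 (T2 x) (T2 y) = 0"
      using bracket_coord_flag[OF B2(1-3), of "T2 x" b "T2 y" b] T2(5) B2(2) by (simp add: alternating_def)
    then show False using B2(4) xy(2) by simp
  qed
  then obtain T3 c where T3: "bij T3" "Modules.additive T3" "\<forall>u\<in>coord_subspace {a, b}. T3 u = u"
      "c \<notin> {a, b}" "T3 (T2 y) \<in> coord_subspace {a, b, c}" "T3 (T2 y) $ c \<noteq> 0"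
    using reduce_to_single_coordinate[of "- {a, b}" "T2 y"] by (auto simp: coord_subspace_def insert_commute)
  define B3 where "B3 = push_bracket T3 B2"
  have B3: "biadditive B3" "alternating B3" "axis a 1 \<in> center B3" "B3 (T3 (T2 x)) (T3 (T2 y)) = axis a t"
    using push_bracket_central_axis[OF T3(1-3) insertI1 B2] by (simp_all add: B3_def)
  then have "(T2 x $ b * T3 (T2 y) $ c) *s B3 (axis b 1) (axis c 1) = axis a t"
    using bracket_coord_flag[OF B3(1-3) T2(5) T3(5)] T3(3) T2(5) by simp
  then obtain \<tau> where "B3 (axis b 1) (axis c 1) = axis a \<tau>" "\<tau> \<noteq> 0"
    using smult_eq_axisD[OF _ xy(2)] by blast
  then have "heisenberg_triple (push_bracket (T3 \<circ> T2) B) a b c \<tau>"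
    using B3 T2(4) T3(4) by unfold_locales (auto simp: B3_def B2_def push_bracket_comp T2(1) T3(1))
  then show ?thesis using bij_comp[OF T2(1) T3(1)] additive_comp[OF T3(2) T2(2)] by blast
qed

lemma heisenberg_normal_form:
  fixes B :: "int^'n \<Rightarrow> int^'n \<Rightarrow> int^'n"
  assumes B: "biadditive B" "alternating B" and xy: "B x y \<noteq> 0" "B x y \<in> center B"
  shows "\<exists>(T :: int^'n \<Rightarrow> int^'n) a b c \<tau>.
    bij T \<and> Modules.additive T \<and> heisenberg_triple (push_bracket T B) a b c \<tau>"
proof -
  obtain T1 :: "int^'n \<Rightarrow> int^'n" and a where T1: "bij T1" "Modules.additive T1"
      "T1 (B x y) \<in> coord_subspace {a}" "T1 (B x y) $ a \<noteq> 0"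
    using reduce_to_single_coordinate[of UNIV "B x y"] xy(1) by (auto simp: vec_eq_iff)
  define t where "t = T1 (B x y) $ a"
  have T1z: "T1 (B x y) = axis a t" using coord_subspace_singletonD[OF T1(3)] by (simp add: t_def)
  define B1 where "B1 = push_bracket T1 B"
  have B1: "biadditive B1" "alternating B1"
    using biadditive_push_bracket[OF T1(1,2) B(1)] alternating_push_bracket[OF T1(1,2) B(2)]
    by (simp_all add: B1_def)
  have "t *s axis a 1 \<in> center B1"
    using center_push_bracket[OF T1(1,2) xy(2)] T1z axis_eq_smult[of a t] by (simp add: B1_def)
  then have "axis a 1 \<in> center B1" using center_smult_cancel[OF B1(1)] T1(4) t_def by blast
  moreover have "B1 (T1 x) (T1 y) = axis a t"
    using T1z by (simp add: B1_def push_bracket_apply bij_is_inj T1(1))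
  ultimately obtain T b c \<tau> where T: "bij T" "Modules.additive T"
      "heisenberg_triple (push_bracket T B1) a b c \<tau>"
    using heisenberg_triple_of_central_axis[OF B1] T1(4) t_def by blast
  then have "heisenberg_triple (push_bracket (T \<circ> T1) B) a b c \<tau>"
    by (simp add: B1_def push_bracket_comp T1(1))
  then show ?thesis using bij_comp[OF T1(1) T(1)] additive_comp[OF T(2) T1(2)] by blast
qed

section \<open>Full lattices in coordinate subspaces and their pivots\<close>

definition coord_cosets :: "'n set \<Rightarrow> (int^'n) set \<Rightarrow> (int^'n) set set" where
  "coord_cosets J M = {(\<lambda>m. x + m) ` M | x. x \<in> coord_subspace J}"

definition coord_index :: "'n set \<Rightarrow> (int^'n) set \<Rightarrow> nat" where
  "coord_index J M = card (coord_cosets J M)"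

definition full_lattices :: "'n set \<Rightarrow> (int^'n) set set" where
  "full_lattices J = {M. add_subgroup M \<and> M \<subseteq> coord_subspace J \<and> finite (coord_cosets J M)}"

text \<open>In Hermite normal form with respect to the flag of coordinate subspaces,
  \<open>pivot j M\<close> is the diagonal entry of column \<open>j\<close>, and \<open>pivot_coset j J M\<close> records the entries
  above it, modulo the slice \<open>M \<inter> coord_subspace J\<close>.\<close>

definition pivot :: "'n \<Rightarrow> (int^'n) set \<Rightarrow> nat" where
  "pivot j M = (LEAST d. 0 < d \<and> (\<exists>v\<in>M. v$j = int d))"

definition pivot_coset :: "'n \<Rightarrow> 'n set \<Rightarrow> (int^'n) set \<Rightarrow> (int^'n) set" where
  "pivot_coset j J M = {w \<in> coord_subspace J. axis j (int (pivot j M)) + w \<in> M}"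

definition lift_coset :: "'n \<Rightarrow> (int^'n) set \<Rightarrow> (int^'n) set \<times> nat \<Rightarrow> (int^'n) set" where
  "lift_coset j M = (\<lambda>(C, r). {c + axis j (int r) + m | c m. c \<in> C \<and> m \<in> M})"

lemma add_index_eq_coord_index: "add_index M = coord_index UNIV M"
  by (simp add: add_index_def coord_index_def coord_cosets_def)

lemma full_lattices_UNIV: "add_subgroup M \<Longrightarrow> add_index M \<noteq> 0 \<Longrightarrow> M \<in> full_lattices UNIV"
  by (auto simp: full_lattices_def add_index_eq_coord_index coord_index_def card_eq_0_iff)

lemma full_lattices_empty: "full_lattices {} = {{0}}"
  by (auto simp: full_lattices_def add_subgroup_def coord_cosets_def)

lemma coord_index_empty: "coord_index {} {0} = 1"
  by (simp add: coord_index_def coord_cosets_def)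

lemma coord_index_pos: "M \<in> full_lattices J \<Longrightarrow> 0 < coord_index J M"
proof -
  assume M: "M \<in> full_lattices J"
  then have "M \<in> coord_cosets J M"
    unfolding coord_cosets_def by (intro CollectI exI[of _ 0]) (simp add: coord_subspace_def)
  then show ?thesis using M by (auto simp: coord_index_def full_lattices_def card_gt_0_iff)
qed

lemma full_lattice_axis_multiple:
  assumes "M \<in> full_lattices J" "j \<in> J"
  shows "\<exists>k>0. axis j (int k) \<in> M"
proof -
  have M: "add_subgroup M" "finite (coord_cosets J M)" using assms(1) by (auto simp: full_lattices_def)
  define N where "N = card (coord_cosets J M)"
  define f where "f r = (\<lambda>m. axis j (int r) + m) ` M" for r
  have sub: "f ` {0..N} \<subseteq> coord_cosets J M"
    using assms(2) by (auto simp: f_def coord_cosets_def axis_in_coord_subspace)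
  have "\<not> inj_on f {0..N}"
  proof
    assume "inj_on f {0..N}"
    then have "card (f ` {0..N}) = Suc N" by (simp add: card_image)
    moreover have "card (f ` {0..N}) \<le> N" using card_mono[OF M(2) sub] by (simp add: N_def)
    ultimately show False by simp
  qed
  then obtain r s where "r \<noteq> s" "f r = f s" by (auto simp: inj_on_def)
  then obtain r s where rs: "r < s" "f r = f s" by (metis linorder_neqE_nat)
  then have "axis j (int s) - axis j (int r) \<in> M"
    using add_subgroup_coset_eq_iff[OF M(1), of "axis j (int s)" "axis j (int r)"] by (simp add: f_def)
  moreover have "axis j (int s) - axis j (int r) = axis j (int (s - r))"
    using rs(1) by (simp add: axis_def vec_eq_iff of_nat_diff)
  ultimately show ?thesis using rs(1) by (metis zero_less_diff)
qed

lemma pivot_spec: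
  assumes "\<exists>k>0. axis j (int k) \<in> M"
  shows "0 < pivot j M" "\<exists>v\<in>M. v$j = int (pivot j M)"
proof -
  have "\<exists>d. 0 < d \<and> (\<exists>v\<in>M. v$j = int d)" using assms by (metis axis_nth)
  from LeastI_ex[OF this] show "0 < pivot j M" "\<exists>v\<in>M. v$j = int (pivot j M)"
    by (simp_all add: pivot_def)
qed

lemma pivot_dvd:
  assumes M: "add_subgroup M" and ex: "\<exists>k>0. axis j (int k) \<in> M" and u: "u \<in> M"
  shows "int (pivot j M) dvd u$j"
proof -
  define d where "d = pivot j M"
  obtain w where w: "w \<in> M" "w$j = int d" using pivot_spec(2)[OF ex] by (auto simp: d_def)
  define r where "r = u$j mod int d"
  have r: "0 \<le> r" "r < int d" using pivot_spec(1)[OF ex] by (simp_all add: r_def d_def)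
  have "u - (u$j div int d) *s w \<in> M" using M u w(1) by (simp add: add_subgroup_diff add_subgroup_smult)
  moreover have "(u - (u$j div int d) *s w)$j = int (nat r)"
    using w(2) r(1) by (simp add: r_def minus_div_mult_eq_mod)
  ultimately have "\<exists>v\<in>M. v$j = int (nat r)" by blast
  then have "r \<noteq> 0 \<Longrightarrow> d \<le> nat r"
    unfolding d_def pivot_def using r(1) by (intro Least_le) simp
  then have "r = 0" using r by linarith
  then show ?thesis by (simp add: r_def d_def dvd_eq_mod_eq_0)
qed

lemma full_lattice_pivot_pos: "M \<in> full_lattices J \<Longrightarrow> j \<in> J \<Longrightarrow> 0 < pivot j M"
  using pivot_spec(1)[OF full_lattice_axis_multiple] .

locale pivot_step =
  fixes j :: "'n::finite" and J :: "'n set" and M :: "(int^'n) set"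
  assumes j_notin: "j \<notin> J" and lattice: "M \<in> full_lattices (insert j J)"
begin

lemma subgroup: "add_subgroup M" and subset: "M \<subseteq> coord_subspace (insert j J)"
  and finite_cosets: "finite (coord_cosets (insert j J) M)"
  using lattice by (simp_all add: full_lattices_def)

lemma subgroup_slice: "add_subgroup (M \<inter> coord_subspace J)"
  by (simp add: add_subgroup_Int subgroup add_subgroup_coord_subspace)

lemma axis_multiple: "\<exists>k>0. axis j (int k) \<in> M"
  using full_lattice_axis_multiple[OF lattice] by simp

lemma pivot_pos: "0 < pivot j M"
  using full_lattice_pivot_pos[OF lattice] by simp

lemma pivot_dvd_nth: "u \<in> M \<Longrightarrow> int (pivot j M) dvd u$j"
  using pivot_dvd[OF subgroup axis_multiple] .

lemma pivot_coset_in_cosets: "pivot_coset j J M \<in> coord_cosets J (M \<inter> coord_subspace J)"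
proof -
  obtain v0 where v0: "v0 \<in> M" "v0$j = int (pivot j M)" using pivot_spec(2)[OF axis_multiple] by blast
  define w0 where "w0 = v0 - axis j (int (pivot j M))"
  have w0: "w0 \<in> coord_subspace J"
    by (rule coord_subspace_insert_nth_zero[of _ j])
      (use v0 subset j_notin in \<open>auto simp: w0_def coord_subspace_def axis_def\<close>)
  have "pivot_coset j J M = (\<lambda>m. w0 + m) ` (M \<inter> coord_subspace J)"
  proof (intro equalityI subsetI)
    fix w assume w: "w \<in> pivot_coset j J M"
    have "w - w0 \<in> M"
      using add_subgroup_diff[OF subgroup, of "axis j (int (pivot j M)) + w" v0] w v0(1)
      by (simp add: pivot_coset_def w0_def algebra_simps)
    moreover have "w - w0 \<in> coord_subspace J"
      using w w0 by (simp add: pivot_coset_def coord_subspace_diff)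
    ultimately show "w \<in> (\<lambda>m. w0 + m) ` (M \<inter> coord_subspace J)"
      by (intro image_eqI[of _ _ "w - w0"]) auto
  next
    fix w assume "w \<in> (\<lambda>m. w0 + m) ` (M \<inter> coord_subspace J)"
    then obtain m where "m \<in> M" "m \<in> coord_subspace J" "w = w0 + m" by blast
    then show "w \<in> pivot_coset j J M"
      using v0(1) w0 add_subgroup_coord_subspace subgroup
      by (auto simp: pivot_coset_def w0_def add_subgroup_def)
  qed
  then show ?thesis using w0 by (auto simp: coord_cosets_def)
qed

lemma lift_coset_eq:
  "lift_coset j M ((\<lambda>m. x + m) ` (M \<inter> coord_subspace J), r) = (\<lambda>m. x + axis j (int r) + m) ` M"
proof (intro equalityI subsetI)
  fix y assume "y \<in> lift_coset j M ((\<lambda>m. x + m) ` (M \<inter> coord_subspace J), r)"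
  then obtain m1 m where "m1 \<in> M" "m \<in> M" "y = x + m1 + axis j (int r) + m" by (auto simp: lift_coset_def)
  moreover have "m1 + m \<in> M" using calculation subgroup by (simp add: add_subgroup_def)
  ultimately show "y \<in> (\<lambda>m. x + axis j (int r) + m) ` M"
    by (intro image_eqI[of _ _ "m1 + m"]) (auto simp: algebra_simps)
next
  fix y assume "y \<in> (\<lambda>m. x + axis j (int r) + m) ` M"
  moreover have "x \<in> (\<lambda>m. x + m) ` (M \<inter> coord_subspace J)"
    using subgroup_slice by (force simp: add_subgroup_def)
  ultimately show "y \<in> lift_coset j M ((\<lambda>m. x + m) ` (M \<inter> coord_subspace J), r)"
    by (force simp: lift_coset_def)
qed

lemma inj_on_lift_coset:
  "inj_on (lift_coset j M) (coord_cosets J (M \<inter> coord_subspace J) \<times> {0..<pivot j M})"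
proof (rule inj_onI)
  fix p q
  assume "p \<in> coord_cosets J (M \<inter> coord_subspace J) \<times> {0..<pivot j M}"
    "q \<in> coord_cosets J (M \<inter> coord_subspace J) \<times> {0..<pivot j M}" and eq: "lift_coset j M p = lift_coset j M q"
  then obtain x r y s where xy: "x \<in> coord_subspace J" "y \<in> coord_subspace J" "r < pivot j M" "s < pivot j M"
    and pq: "p = ((\<lambda>m. x + m) ` (M \<inter> coord_subspace J), r)" "q = ((\<lambda>m. y + m) ` (M \<inter> coord_subspace J), s)"
    by (auto simp: coord_cosets_def)
  then have "(\<lambda>m. x + axis j (int r) + m) ` M = (\<lambda>m. y + axis j (int s) + m) ` M"
    using eq lift_coset_eq by simp
  then have diff: "(x + axis j (int r)) - (y + axis j (int s)) \<in> M"
    by (simp only: add_subgroup_coset_eq_iff[OF subgroup])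
  have "x$j = 0" "y$j = 0" using xy j_notin by (auto simp: coord_subspace_def)
  then have "int (pivot j M) dvd int r - int s" using pivot_dvd_nth[OF diff] by simp
  then have "r = s" using xy(3,4) by (simp flip: mod_eq_dvd_iff)
  then have "x - y \<in> M \<inter> coord_subspace J" using diff xy coord_subspace_diff by simp
  then show "p = q" using \<open>r = s\<close> pq add_subgroup_coset_eq_iff[OF subgroup_slice] by simp
qed

lemma lift_coset_image:
  "lift_coset j M ` (coord_cosets J (M \<inter> coord_subspace J) \<times> {0..<pivot j M}) = coord_cosets (insert j J) M"
proof (intro equalityI subsetI)
  fix E assume "E \<in> lift_coset j M ` (coord_cosets J (M \<inter> coord_subspace J) \<times> {0..<pivot j M})"
  then obtain C r where C: "C \<in> coord_cosets J (M \<inter> coord_subspace J)" "E = lift_coset j M (C, r)" by blast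
  then obtain x where x: "x \<in> coord_subspace J" "C = (\<lambda>m. x + m) ` (M \<inter> coord_subspace J)"
    by (auto simp: coord_cosets_def)
  then have "E = (\<lambda>m. x + axis j (int r) + m) ` M" using C(2) lift_coset_eq by simp
  moreover have "x + axis j (int r) \<in> coord_subspace (insert j J)"
    using x(1) by (auto simp: coord_subspace_def axis_def)
  ultimately show "E \<in> coord_cosets (insert j J) M" unfolding coord_cosets_def by blast
next
  fix E assume "E \<in> coord_cosets (insert j J) M"
  then obtain y where y: "y \<in> coord_subspace (insert j J)" "E = (\<lambda>m. y + m) ` M"
    by (auto simp: coord_cosets_def)
  define d where "d = pivot j M"
  obtain v0 where v0: "v0 \<in> M" "v0$j = int d" using pivot_spec(2)[OF axis_multiple] by (auto simp: d_def)
  define r where "r = nat (y$j mod int d)"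
  define x where "x = y - (y$j div int d) *s v0 - axis j (int r)"
  have r: "r < d" "int r = y$j mod int d" using pivot_pos by (simp_all add: r_def d_def nat_less_iff)
  have "x$j = 0" using v0(2) r(2) by (simp add: x_def minus_div_mult_eq_mod)
  moreover have "x \<in> coord_subspace (insert j J)"
    using y(1) v0(1) subset by (auto simp: x_def coord_subspace_def axis_def)
  ultimately have x: "x \<in> coord_subspace J" by (rule coord_subspace_insert_nth_zero[rotated])
  have "(\<lambda>m. y + m) ` M = (\<lambda>m. x + axis j (int r) + m) ` M"
    using add_subgroup_coset_eq_iff[OF subgroup] add_subgroup_smult[OF subgroup v0(1)]
    by (simp add: x_def)
  then have "E = lift_coset j M ((\<lambda>m. x + m) ` (M \<inter> coord_subspace J), r)"
    using y(2) lift_coset_eq by simp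
  moreover have "(\<lambda>m. x + m) ` (M \<inter> coord_subspace J) \<in> coord_cosets J (M \<inter> coord_subspace J)"
    using x by (auto simp: coord_cosets_def)
  moreover have "r \<in> {0..<pivot j M}" using r(1) by (simp add: d_def)
  ultimately show "E \<in> lift_coset j M ` (coord_cosets J (M \<inter> coord_subspace J) \<times> {0..<pivot j M})"
    by blast
qed

lemma slice_in_full_lattices: "M \<inter> coord_subspace J \<in> full_lattices J"
proof -
  have "finite (coord_cosets J (M \<inter> coord_subspace J) \<times> {0..<pivot j M})"
    using finite_imageD[OF _ inj_on_lift_coset] lift_coset_image finite_cosets by simp
  then have "finite (coord_cosets J (M \<inter> coord_subspace J))"
    using pivot_pos by (auto dest: finite_cartesian_productD1)
  then show ?thesis using subgroup_slice by (simp add: full_lattices_def)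
qed

lemma coord_index_insert:
  "coord_index (insert j J) M = coord_index J (M \<inter> coord_subspace J) * pivot j M"
  using card_image[OF inj_on_lift_coset] lift_coset_image
  by (simp add: coord_index_def card_cartesian_product)

end

lemmas slice_in_full_lattices = pivot_step.slice_in_full_lattices[OF pivot_step.intro]
lemmas coord_index_insert = pivot_step.coord_index_insert[OF pivot_step.intro]

lemma full_lattices_eq_by_pivot_data:
  assumes j: "j \<notin> J" and M: "M \<in> full_lattices (insert j J)" "M' \<in> full_lattices (insert j J)"
    and eq: "M \<inter> coord_subspace J = M' \<inter> coord_subspace J" "pivot j M = pivot j M'"
      "pivot_coset j J M = pivot_coset j J M'"
  shows "M = M'"
proof -
  have sub: "M1 \<subseteq> M2" if "M1 \<in> full_lattices (insert j J)" "M2 \<in> full_lattices (insert j J)"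
    and eq: "M1 \<inter> coord_subspace J = M2 \<inter> coord_subspace J" "pivot j M1 = pivot j M2"
      "pivot_coset j J M1 = pivot_coset j J M2" for M1 M2
  proof
    interpret A: pivot_step j J M1 using j that(1) by unfold_locales
    interpret B: pivot_step j J M2 using j that(2) by unfold_locales
    obtain v0 where v0: "v0 \<in> M1" "v0$j = int (pivot j M1)" using pivot_spec(2)[OF A.axis_multiple] by blast
    have "v0 - axis j (int (pivot j M1)) \<in> pivot_coset j J M1"
      using v0 A.subset j by (auto simp: pivot_coset_def coord_subspace_def axis_def)
    then have "v0 - axis j (int (pivot j M1)) \<in> pivot_coset j J M2" using eq(3) by simp
    then have v0': "v0 \<in> M2" using eq(2) by (simp add: pivot_coset_def)
    fix v assume v: "v \<in> M1"
    obtain q where q: "v$j = int (pivot j M1) * q" using A.pivot_dvd_nth[OF v] by (auto simp: dvd_def)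
    have "v - q *s v0 \<in> M1" using v v0(1) A.subgroup by (simp add: add_subgroup_diff add_subgroup_smult)
    moreover have "v - q *s v0 \<in> coord_subspace J"
    proof (rule coord_subspace_insert_nth_zero[of _ j])
      have "v \<in> coord_subspace (insert j J)" "v0 \<in> coord_subspace (insert j J)" using v v0 A.subset by auto
      then show "v - q *s v0 \<in> coord_subspace (insert j J)" by (simp add: coord_subspace_def)
      show "(v - q *s v0)$j = 0" using q v0(2) by simp
    qed
    ultimately have "v - q *s v0 \<in> M2" using eq(1) by blast
    then have "(v - q *s v0) + q *s v0 \<in> M2"
      using add_subgroup_smult[OF B.subgroup v0'] B.subgroup unfolding add_subgroup_def by blast
    then show "v \<in> M2" by simp
  qed
  show ?thesis using sub[OF M eq] sub[OF M(2,1) eq[symmetric]] by blast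
qed

lemma card_pivot_fibre_le:
  fixes d :: nat
  assumes j: "j \<notin> J" and A: "finite A" "A \<subseteq> full_lattices J"
  defines "F \<equiv> {M \<in> full_lattices (insert j J). M \<inter> coord_subspace J \<in> A \<and> pivot j M = d}"
  shows "finite F" "card F \<le> (\<Sum>X\<in>A. coord_index J X)"
proof -
  define \<phi> where "\<phi> M = (M \<inter> coord_subspace J, pivot_coset j J M)" for M
  have inj: "inj_on \<phi> F"
    using full_lattices_eq_by_pivot_data[OF j] by (auto simp: inj_on_def \<phi>_def F_def)
  have sub: "\<phi> ` F \<subseteq> Sigma A (coord_cosets J)"
    using pivot_step.pivot_coset_in_cosets j by (auto simp: \<phi>_def F_def pivot_step_def)
  have fin: "\<forall>X\<in>A. finite (coord_cosets J X)" using A(2) by (auto simp: full_lattices_def)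
  then have "finite (\<phi> ` F)" using A(1) by (blast intro: finite_subset[OF sub])
  then show "finite F" using finite_imageD[OF _ inj] by blast
  have "card F = card (\<phi> ` F)" using card_image[OF inj] by simp
  also have "\<dots> \<le> card (Sigma A (coord_cosets J))" using A(1) fin by (intro card_mono[OF _ sub]) auto
  also have "\<dots> = (\<Sum>X\<in>A. coord_index J X)" using A(1) fin by (simp add: card_SigmaI coord_index_def)
  finally show "card F \<le> (\<Sum>X\<in>A. coord_index J X)" .
qed

section \<open>Dirichlet series over full lattices\<close>

text \<open>The term \<open>d = 0\<close> contributes nothing, as \<open>0 powr x = 0\<close>.\<close>

definition zeta :: "real \<Rightarrow> real" where
  "zeta p = (\<Sum>d. real d powr - p)"

lemma sum_le_zeta: "1 < p \<Longrightarrow> finite A \<Longrightarrow> (\<Sum>d\<in>A. real d powr - p) \<le> zeta p"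
  unfolding zeta_def by (intro sum_le_suminf) (auto simp: summable_real_powr_iff)

lemma sum_triples_le_zeta_cube:
  assumes "1 < p" "finite T"
  shows "(\<Sum>(d1, d2, d3)\<in>T. real (d1 * d2 * d3) powr - p) \<le> zeta p ^ 3"
proof -
  define D where "D = fst ` T \<union> fst ` snd ` T \<union> snd ` snd ` T"
  have D: "finite D" "T \<subseteq> D \<times> D \<times> D" using assms(2) by (auto simp: D_def image_iff) force+
  have "(\<Sum>(d1, d2, d3)\<in>T. real (d1 * d2 * d3) powr - p)
      \<le> (\<Sum>(d1, d2, d3)\<in>D \<times> D \<times> D. real (d1 * d2 * d3) powr - p)"
    using D by (intro sum_mono2) (auto intro: finite_cartesian_product)
  also have "\<dots> = (\<Sum>d1\<in>D. \<Sum>d2\<in>D. \<Sum>d3\<in>D. real d1 powr - p * (real d2 powr - p * real d3 powr - p))"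
    by (simp add: sum.cartesian_product powr_mult mult.assoc)
  also have "\<dots> = (\<Sum>d\<in>D. real d powr - p) ^ 3"
    by (simp add: power3_eq_cube flip: sum_distrib_left sum_distrib_right)
  also have "\<dots> \<le> zeta p ^ 3"
    using sum_le_zeta[OF assms(1) D(1)] by (intro power_mono) (auto intro: sum_nonneg)
  finally show ?thesis .
qed

lemma sum_fibres_le:
  fixes f :: "'b \<Rightarrow> real"
  assumes "finite S" and card: "\<And>t. t \<in> \<phi> ` S \<Longrightarrow> real (card {x \<in> S. \<phi> x = t}) \<le> b t"
    and nonneg: "\<And>t. t \<in> \<phi> ` S \<Longrightarrow> 0 \<le> f t"
  shows "(\<Sum>x\<in>S. f (\<phi> x)) \<le> (\<Sum>t\<in>\<phi> ` S. b t * f t)"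
proof -
  have "(\<Sum>x\<in>S. f (\<phi> x)) = (\<Sum>t\<in>\<phi> ` S. \<Sum>x\<in>{x \<in> S. \<phi> x = t}. f (\<phi> x))"
    by (rule sum.image_gen[OF assms(1)])
  also have "\<dots> = (\<Sum>t\<in>\<phi> ` S. real (card {x \<in> S. \<phi> x = t}) * f t)"
    by (intro sum.cong) auto
  also have "\<dots> \<le> (\<Sum>t\<in>\<phi> ` S. b t * f t)"
    using card nonneg by (intro sum_mono mult_right_mono) auto
  finally show ?thesis .
qed

lemma mult_powr_shift: "0 < (x::real) \<Longrightarrow> 0 \<le> y \<Longrightarrow> x * (x * y) powr - s = x powr - (s - 1) * y powr - s"
  by (simp add: powr_mult powr_mult_base mult.assoc[symmetric] add.commute)

definition bounded_lattice_zeta :: "'n set \<Rightarrow> ((int^'n) set \<Rightarrow> bool) \<Rightarrow> real \<Rightarrow> bool" where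
  "bounded_lattice_zeta J Q s \<longleftrightarrow> (\<exists>K. \<forall>S. finite S \<and> S \<subseteq> {M \<in> full_lattices J. Q M} \<longrightarrow>
     (\<Sum>M\<in>S. real (coord_index J M) powr - s) \<le> K)"

text \<open>A lattice with slice \<open>X\<close> and pivot \<open>d\<close> has index \<open>coord_index J X * d\<close>, and there are at
  most \<open>coord_index J X\<close> of them.\<close>

lemma sum_index_powr_insert_le:
  assumes j: "j \<notin> J" and S: "finite S" "S \<subseteq> full_lattices (insert j J)"
  shows "(\<Sum>M\<in>S. real (coord_index (insert j J) M) powr - s)
    \<le> (\<Sum>X\<in>(\<lambda>M. M \<inter> coord_subspace J) ` S. real (coord_index J X) powr - (s - 1))
      * (\<Sum>d\<in>pivot j ` S. real d powr - s)"
proof -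
  define \<psi> where "\<psi> M = (M \<inter> coord_subspace J, pivot j M)" for M
  define g where "g = (\<lambda>(X, d). real (coord_index J X * d) powr - s)"
  define SJ where "SJ = (\<lambda>M. M \<inter> coord_subspace J) ` S"
  have SJ: "SJ \<subseteq> full_lattices J" using S(2) slice_in_full_lattices[OF j] by (auto simp: SJ_def)
  have "(\<Sum>M\<in>S. real (coord_index (insert j J) M) powr - s) = (\<Sum>M\<in>S. g (\<psi> M))"
    using S(2) by (intro sum.cong) (auto simp: g_def \<psi>_def coord_index_insert[OF j])
  also have "\<dots> \<le> (\<Sum>t\<in>\<psi> ` S. real (coord_index J (fst t)) * g t)"
  proof (rule sum_fibres_le[OF S(1)])
    fix t assume t: "t \<in> \<psi> ` S"
    then have X: "fst t \<in> full_lattices J" using SJ by (auto simp: SJ_def \<psi>_def)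
    let ?F = "{M \<in> full_lattices (insert j J). M \<inter> coord_subspace J \<in> {fst t} \<and> pivot j M = snd t}"
    have "{M \<in> S. \<psi> M = t} \<subseteq> ?F" using S(2) by (auto simp: \<psi>_def)
    then have "card {M \<in> S. \<psi> M = t} \<le> card ?F"
      using card_pivot_fibre_le(1)[OF j, of "{fst t}"] X by (intro card_mono) auto
    also have "\<dots> \<le> coord_index J (fst t)" using card_pivot_fibre_le(2)[OF j, of "{fst t}"] X by simp
    finally show "real (card {M \<in> S. \<psi> M = t}) \<le> real (coord_index J (fst t))" by simp
  qed (auto simp: g_def)
  also have "\<dots> = (\<Sum>t\<in>\<psi> ` S. real (coord_index J (fst t)) powr - (s - 1) * real (snd t) powr - s)"
  proof (rule sum.cong[OF refl])
    fix t assume "t \<in> \<psi> ` S"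
    moreover obtain X d where t: "t = (X, d)" by fastforce
    ultimately have "X \<in> SJ" unfolding SJ_def \<psi>_def by auto
    then have "0 < coord_index J X" using SJ coord_index_pos by blast
    then show "real (coord_index J (fst t)) * g t
        = real (coord_index J (fst t)) powr - (s - 1) * real (snd t) powr - s"
      using mult_powr_shift[of "real (coord_index J X)" "real d" s] by (simp add: g_def t)
  qed
  also have "\<dots> \<le> (\<Sum>t\<in>SJ \<times> pivot j ` S. real (coord_index J (fst t)) powr - (s - 1) * real (snd t) powr - s)"
    using S(1) by (intro sum_mono2) (auto simp: SJ_def \<psi>_def)
  also have "\<dots> = (\<Sum>X\<in>SJ. real (coord_index J X) powr - (s - 1)) * (\<Sum>d\<in>pivot j ` S. real d powr - s)"
    by (simp add: sum_product sum.cartesian_product case_prod_beta)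
  finally show ?thesis by (simp add: SJ_def)
qed

lemma bounded_lattice_zeta_insert:
  assumes j: "j \<notin> J" and Q: "\<And>M. Q (M \<inter> coord_subspace J) = Q M" and s: "1 < s"
    and bounded: "bounded_lattice_zeta J Q (s - 1)"
  shows "bounded_lattice_zeta (insert j J) Q s"
proof -
  obtain K where K: "\<And>S. finite S \<Longrightarrow> S \<subseteq> {M \<in> full_lattices J. Q M} \<Longrightarrow>
      (\<Sum>M\<in>S. real (coord_index J M) powr - (s - 1)) \<le> K"
    using bounded by (auto simp: bounded_lattice_zeta_def)
  have "(\<Sum>M\<in>S. real (coord_index (insert j J) M) powr - s) \<le> K * zeta s"
    if S: "finite S" "S \<subseteq> {M \<in> full_lattices (insert j J). Q M}" for S
  proof -
    have "(\<lambda>M. M \<inter> coord_subspace J) ` S \<subseteq> {X \<in> full_lattices J. Q X}"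
      using S(2) slice_in_full_lattices[OF j] Q by auto
    then have "(\<Sum>X\<in>(\<lambda>M. M \<inter> coord_subspace J) ` S. real (coord_index J X) powr - (s - 1)) \<le> K"
      using K[OF finite_imageI[OF S(1)]] by blast
    moreover have "(\<Sum>d\<in>pivot j ` S. real d powr - s) \<le> zeta s"
      using sum_le_zeta[OF s finite_imageI[OF S(1)]] .
    moreover have "0 \<le> K" using K[of "{}"] by simp
    ultimately have "(\<Sum>X\<in>(\<lambda>M. M \<inter> coord_subspace J) ` S. real (coord_index J X) powr - (s - 1))
        * (\<Sum>d\<in>pivot j ` S. real d powr - s) \<le> K * zeta s"
      by (intro mult_mono sum_nonneg) auto
    moreover have "S \<subseteq> full_lattices (insert j J)" using S(2) by auto
    ultimately show ?thesis using sum_index_powr_insert_le[OF j S(1)] by (meson order_trans)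
  qed
  then show ?thesis by (auto simp: bounded_lattice_zeta_def)
qed

lemma bounded_lattice_zeta_union:
  assumes R: "finite R" "R \<inter> J = {}"
    and base: "\<And>s. s0 < s \<Longrightarrow> bounded_lattice_zeta J Q s"
    and Q: "\<And>M K. J \<subseteq> K \<Longrightarrow> Q (M \<inter> coord_subspace K) = Q M" and s0: "0 \<le> s0"
  shows "s0 + card R < s \<Longrightarrow> bounded_lattice_zeta (J \<union> R) Q s"
  using R
proof (induction R arbitrary: s rule: finite_induct)
  case empty
  then show ?case using base by simp
next
  case (insert j R)
  have "bounded_lattice_zeta (insert j (J \<union> R)) Q s"
    using insert s0 by (intro bounded_lattice_zeta_insert Q) auto
  then show ?case by simp
qed

lemma summable_of_bounded_lattice_zeta:
  fixes P :: "(int^'n) set \<Rightarrow> bool"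
  assumes PQ: "\<And>M. P M \<Longrightarrow> add_index M \<noteq> 0 \<Longrightarrow> M \<in> full_lattices UNIV \<and> Q M"
    and bounded: "bounded_lattice_zeta UNIV Q s"
  shows "summable (\<lambda>n. real (card {M. P M \<and> add_index M = Suc n}) / real (Suc n) powr s)"
proof -
  obtain K where K: "\<And>S. finite S \<Longrightarrow> S \<subseteq> {M \<in> full_lattices UNIV. Q M} \<Longrightarrow>
      (\<Sum>M\<in>S. real (coord_index UNIV M) powr - s) \<le> K"
    using bounded by (auto simp: bounded_lattice_zeta_def)
  define A where "A n = {M. P M \<and> add_index M = Suc n}" for n
  define A' where "A' n = (if finite (A n) then A n else {})" for n
  have series_term: "real (card (A n)) / real (Suc n) powr s = (\<Sum>M\<in>A' n. real (coord_index UNIV M) powr - s)"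
    for n
  proof (cases "finite (A n)")
    case True
    then have "(\<Sum>M\<in>A' n. real (coord_index UNIV M) powr - s) = (\<Sum>M\<in>A n. real (Suc n) powr - s)"
      by (intro sum.cong) (auto simp: A'_def A_def add_index_eq_coord_index[symmetric])
    then show ?thesis by (simp add: powr_minus_divide)
  qed (simp add: A'_def)
  have "summable (\<lambda>n. real (card (A n)) / real (Suc n) powr s)"
  proof (rule summableI_nonneg_bounded[where x = K])
    fix N
    have "(\<Sum>n<N. real (card (A n)) / real (Suc n) powr s)
        = (\<Sum>M\<in>(\<Union>n<N. A' n). real (coord_index UNIV M) powr - s)"
      unfolding series_term by (rule sum.UNION_disjoint[symmetric]) (auto simp: A'_def A_def)
    also have "\<dots> \<le> K"
      using PQ by (intro K) (auto simp: A'_def A_def split: if_splits)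
    finally show "(\<Sum>n<N. real (card (A n)) / real (Suc n) powr s) \<le> K" .
  qed simp
  then show ?thesis by (simp add: A_def)
qed

lemma abscissa_le_of_bounded_lattice_zeta:
  fixes P :: "(int^'n) set \<Rightarrow> bool"
  assumes PQ: "\<And>M. P M \<Longrightarrow> add_index M \<noteq> 0 \<Longrightarrow> M \<in> full_lattices UNIV \<and> Q M"
    and bounded: "\<And>s. t < s \<Longrightarrow> bounded_lattice_zeta UNIV Q s"
  shows "abscissa (\<lambda>n. card {M. P M \<and> add_index M = n}) \<le> ereal t"
  unfolding abscissa_def
proof (rule ereal_le_epsilon2)
  fix e :: real assume "0 < e"
  then have "ereal (t + e) \<in> {ereal s |s. summable (\<lambda>n. real (card {M. P M \<and> add_index M = Suc n})
      / real (Suc n) powr s)}"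
    using summable_of_bounded_lattice_zeta[OF PQ bounded[of "t + e"]] by auto
  then show "Inf {ereal s |s. summable (\<lambda>n. real (card {M. P M \<and> add_index M = Suc n})
      / real (Suc n) powr s)} \<le> ereal t + ereal e"
    by (simp add: Inf_lower)
qed

definition flag_pivots :: "'n \<Rightarrow> 'n \<Rightarrow> 'n \<Rightarrow> (int^'n) set \<Rightarrow> nat \<times> nat \<times> nat" where
  "flag_pivots a b c M =
     (pivot a (M \<inter> coord_subspace {a}), pivot b (M \<inter> coord_subspace {a, b}),
      pivot c (M \<inter> coord_subspace {a, b, c}))"

lemma flag_pivots_Int:
  "{a, b, c} \<subseteq> J \<Longrightarrow> flag_pivots a b c (M \<inter> coord_subspace J) = flag_pivots a b c M"
  by (simp add: flag_pivots_def Int_coord_subspace_subset)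

context
  fixes a b c :: "'n::finite"
  assumes distinct: "a \<noteq> b" "a \<noteq> c" "b \<noteq> c"
begin

lemma flag_insert: "{a, b, c} = insert c (insert b {a})" "{a, b} = insert b {a}"
  by auto

lemma coord_index_flag:
  assumes M: "M \<in> full_lattices {a, b, c}"
  obtains d1 d2 d3 where "flag_pivots a b c M = (d1, d2, d3)" "coord_index {a, b, c} M = d1 * d2 * d3"
    "0 < d1" "0 < d2" "0 < d3"
proof -
  have M3: "M \<in> full_lattices (insert c (insert b {a}))" using M by (simp add: flag_insert)
  have M2: "M \<inter> coord_subspace {a, b} \<in> full_lattices (insert b {a})"
    using slice_in_full_lattices[OF _ M3] distinct by (simp add: flag_insert)
  have M1: "M \<inter> coord_subspace {a} \<in> full_lattices (insert a {})"
    using slice_in_full_lattices[OF _ M2] distinct by (simp add: flag_insert Int_coord_subspace_subset)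
  have M0: "M \<inter> coord_subspace {a} \<inter> coord_subspace {} = {0}"
    using slice_in_full_lattices[OF _ M1] by (simp add: full_lattices_empty)
  have "M \<inter> coord_subspace {a, b, c} = M" using M by (auto simp: full_lattices_def)
  then have "coord_index {a, b, c} M = pivot a (M \<inter> coord_subspace {a})
      * pivot b (M \<inter> coord_subspace {a, b}) * pivot c (M \<inter> coord_subspace {a, b, c})"
    using coord_index_insert[OF _ M3] coord_index_insert[OF _ M2] coord_index_insert[OF _ M1] distinct M0
    by (simp add: flag_insert Int_coord_subspace_subset coord_index_empty)
  moreover have "0 < pivot a (M \<inter> coord_subspace {a})" "0 < pivot b (M \<inter> coord_subspace {a, b})"
    "0 < pivot c (M \<inter> coord_subspace {a, b, c})"
    using full_lattice_pivot_pos[OF M1] full_lattice_pivot_pos[OF M2] full_lattice_pivot_pos[OF M3]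
      \<open>M \<inter> coord_subspace {a, b, c} = M\<close> by (simp_all add: flag_insert)
  ultimately show ?thesis using that by (simp add: flag_pivots_def)
qed

lemma card_flag_pivots_fibre_le:
  fixes d1 d2 d3 :: nat
  defines "F \<equiv> {M \<in> full_lattices {a, b, c}. flag_pivots a b c M = (d1, d2, d3)}"
  shows "finite F" "card F \<le> d1^2 * d2"
proof -
  define F1 where "F1 = {Y \<in> full_lattices (insert a {}). Y \<inter> coord_subspace {} \<in> {{0}} \<and> pivot a Y = d1}"
  define F2 where "F2 = {X \<in> full_lattices (insert b {a}). X \<inter> coord_subspace {a} \<in> F1 \<and> pivot b X = d2}"
  define F3 where "F3 = {M \<in> full_lattices (insert c (insert b {a})).
    M \<inter> coord_subspace (insert b {a}) \<in> F2 \<and> pivot c M = d3}"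
  have F1: "finite F1" "card F1 \<le> 1"
    using card_pivot_fibre_le[of a "{}" "{{0}}" d1] by (simp_all add: F1_def full_lattices_empty coord_index_empty)
  have F1_index: "Y \<in> full_lattices {a} \<and> coord_index {a} Y = d1" if "Y \<in> F1" for Y
    using that coord_index_insert[of a "{}" Y] by (auto simp: F1_def coord_index_empty)
  have "card F2 \<le> (\<Sum>Y\<in>F1. coord_index {a} Y)" "finite F2"
    using card_pivot_fibre_le[of b "{a}" F1 d2] F1 F1_index distinct by (auto simp: F2_def)
  then have F2: "finite F2" "card F2 \<le> d1"
    using F1 F1_index by (simp_all add: mult_le_cancel2 order_trans)
  have F2_index: "X \<in> full_lattices {a, b} \<and> coord_index {a, b} X = d1 * d2" if "X \<in> F2" for X
    using that coord_index_insert[of b "{a}" X] F1_index distinct by (auto simp: F2_def flag_insert)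
  have "card F3 \<le> (\<Sum>X\<in>F2. coord_index {a, b} X)" "finite F3"
    using card_pivot_fibre_le[of c "insert b {a}" F2 d3] F2 F2_index distinct by (auto simp: F3_def flag_insert)
  then have F3: "finite F3" "card F3 \<le> d1^2 * d2"
    using F2 F2_index order_trans[OF _ mult_le_mono1[OF F2(2)]] by (auto simp: power2_eq_square mult.assoc)
  have "F \<subseteq> F3"
  proof
    fix M assume "M \<in> F"
    then have M: "M \<in> full_lattices (insert c (insert b {a}))" "flag_pivots a b c M = (d1, d2, d3)"
      by (simp_all add: F_def flag_insert)
    have M2: "M \<inter> coord_subspace (insert b {a}) \<in> full_lattices (insert b {a})"
      using slice_in_full_lattices[OF _ M(1)] distinct by simp
    have M1: "M \<inter> coord_subspace {a} \<in> full_lattices (insert a {})"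
      using slice_in_full_lattices[OF _ M2] distinct by (simp add: Int_coord_subspace_subset)
    have "M \<inter> coord_subspace {a} \<inter> coord_subspace {} \<in> {{0}}"
      using slice_in_full_lattices[OF _ M1] by (simp add: full_lattices_empty)
    moreover have "M \<inter> coord_subspace (insert c (insert b {a})) = M" using M(1) by (auto simp: full_lattices_def)
    then have "pivot a (M \<inter> coord_subspace {a}) = d1" "pivot b (M \<inter> coord_subspace (insert b {a})) = d2"
      "pivot c M = d3"
      using M(2) by (simp_all add: flag_pivots_def flag_insert)
    moreover have "M \<inter> coord_subspace (insert b {a}) \<inter> coord_subspace {a} = M \<inter> coord_subspace {a}"
      by (simp add: Int_coord_subspace_subset subset_insertI)
    ultimately show "M \<in> F3" using M(1) M1 M2 by (simp add: F3_def F2_def F1_def)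
  qed
  then show "finite F" "card F \<le> d1^2 * d2"
    using finite_subset[OF _ F3(1)] card_mono[OF F3(1)] F3(2) le_trans by blast+
qed

lemma sum_index_powr_flag_le:
  assumes S: "finite S" "S \<subseteq> full_lattices {a, b, c}"
  shows "(\<Sum>M\<in>S. real (coord_index {a, b, c} M) powr - s)
    \<le> (\<Sum>(d1, d2, d3)\<in>flag_pivots a b c ` S. real (d1^2 * d2) * real (d1 * d2 * d3) powr - s)"
proof -
  define g where "g = (\<lambda>(d1, d2, d3). real (d1 * d2 * d3) powr - s)"
  define w where "w = (\<lambda>(d1, d2, d3 :: nat). real (d1^2 * d2))"
  have "(\<Sum>M\<in>S. real (coord_index {a, b, c} M) powr - s) = (\<Sum>M\<in>S. g (flag_pivots a b c M))"
  proof (rule sum.cong[OF refl])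
    fix M assume "M \<in> S"
    then have "M \<in> full_lattices {a, b, c}" using S(2) by blast
    then obtain d1 d2 d3 where "flag_pivots a b c M = (d1, d2, d3)" "coord_index {a, b, c} M = d1 * d2 * d3"
      by (rule coord_index_flag)
    then show "real (coord_index {a, b, c} M) powr - s = g (flag_pivots a b c M)" by (simp add: g_def)
  qed
  also have "\<dots> \<le> (\<Sum>t\<in>flag_pivots a b c ` S. w t * g t)"
  proof (rule sum_fibres_le[OF S(1)])
    fix t :: "nat \<times> nat \<times> nat"
    obtain d1 d2 d3 where t: "t = (d1, d2, d3)" by (cases t) auto
    have "{M \<in> S. flag_pivots a b c M = t} \<subseteq> {M \<in> full_lattices {a, b, c}. flag_pivots a b c M = (d1, d2, d3)}"
      using S(2) by (auto simp: t)
    then have "card {M \<in> S. flag_pivots a b c M = t} \<le> d1^2 * d2"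
      using card_mono[OF card_flag_pivots_fibre_le(1)] card_flag_pivots_fibre_le(2)[of d1 d2 d3]
      by (meson le_trans)
    then have "real (card {M \<in> S. flag_pivots a b c M = t}) \<le> real (d1^2 * d2)" by (simp only: of_nat_le_iff)
    then show "real (card {M \<in> S. flag_pivots a b c M = t}) \<le> w t" by (simp add: w_def t)
  qed (simp add: g_def split: prod.split)
  finally show ?thesis by (simp add: w_def g_def case_prod_beta)
qed

lemma bounded_lattice_zeta_flag:
  assumes C: "0 \<le> C"
    and P: "\<And>d1 d2 d3. 0 < d1 \<Longrightarrow> 0 < d2 \<Longrightarrow> 0 < d3 \<Longrightarrow> P (d1, d2, d3) \<Longrightarrow>
      real (d1^2 * d2) \<le> C * real (d1 * d2 * d3) powr e"
    and s: "e + 1 < s"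
  shows "bounded_lattice_zeta {a, b, c} (\<lambda>M. P (flag_pivots a b c M)) s"
proof -
  have "(\<Sum>M\<in>S. real (coord_index {a, b, c} M) powr - s) \<le> C * zeta (s - e) ^ 3"
    if S: "finite S" "S \<subseteq> {M \<in> full_lattices {a, b, c}. P (flag_pivots a b c M)}" for S
  proof -
    have "(\<Sum>M\<in>S. real (coord_index {a, b, c} M) powr - s)
        \<le> (\<Sum>(d1, d2, d3)\<in>flag_pivots a b c ` S. real (d1^2 * d2) * real (d1 * d2 * d3) powr - s)"
      using S by (intro sum_index_powr_flag_le) auto
    also have "\<dots> \<le> (\<Sum>(d1, d2, d3)\<in>flag_pivots a b c ` S. C * real (d1 * d2 * d3) powr - (s - e))"
    proof (rule sum_mono)
      fix t assume "t \<in> flag_pivots a b c ` S"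
      then obtain M where M: "M \<in> S" "flag_pivots a b c M = t" by auto
      then have "M \<in> full_lattices {a, b, c}" "P t" using S(2) by auto
      then obtain d1 d2 d3 where d: "t = (d1, d2, d3)" "0 < d1" "0 < d2" "0 < d3" "P (d1, d2, d3)"
        using coord_index_flag M(2) by metis
      then have "real (d1^2 * d2) * real (d1 * d2 * d3) powr - s
          \<le> (C * real (d1 * d2 * d3) powr e) * real (d1 * d2 * d3) powr - s"
        using P[OF d(2-5)] by (intro mult_right_mono) auto
      also have "\<dots> = C * real (d1 * d2 * d3) powr - (s - e)"
        by (simp add: mult.assoc powr_add[symmetric])
      finally show "(\<lambda>(d1, d2, d3). real (d1^2 * d2) * real (d1 * d2 * d3) powr - s) t
          \<le> (\<lambda>(d1, d2, d3). C * real (d1 * d2 * d3) powr - (s - e)) t" by (simp add: d(1))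
    qed
    also have "\<dots> = C * (\<Sum>(d1, d2, d3)\<in>flag_pivots a b c ` S. real (d1 * d2 * d3) powr - (s - e))"
      by (simp add: sum_distrib_left prod.case_distrib)
    also have "\<dots> \<le> C * zeta (s - e) ^ 3"
      using sum_triples_le_zeta_cube[of "s - e" "flag_pivots a b c ` S"] s S(1) C by (simp add: mult_left_mono)
    finally show ?thesis .
  qed
  then show ?thesis by (auto simp: bounded_lattice_zeta_def)
qed

lemma bounded_lattice_zeta_flag_UNIV:
  assumes C: "0 \<le> C" and e: "0 \<le> e"
    and P: "\<And>d1 d2 d3. 0 < d1 \<Longrightarrow> 0 < d2 \<Longrightarrow> 0 < d3 \<Longrightarrow> P (d1, d2, d3) \<Longrightarrow>
      real (d1^2 * d2) \<le> C * real (d1 * d2 * d3) powr e"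
    and s: "real CARD('n) - 2 + e < s"
  shows "bounded_lattice_zeta UNIV (\<lambda>M. P (flag_pivots a b c M)) s"
proof -
  have "card {a, b, c} = 3" using distinct by simp
  then have card: "card (- {a, b, c}) = CARD('n) - 3" "3 \<le> CARD('n)"
    using card_mono[of UNIV "{a, b, c}"] by (simp_all add: Compl_eq_Diff_UNIV card_Diff_subset)
  have "bounded_lattice_zeta ({a, b, c} \<union> - {a, b, c}) (\<lambda>M. P (flag_pivots a b c M)) s"
    using card s e
    by (intro bounded_lattice_zeta_union[of "- {a, b, c}" "{a, b, c}" "e + 1"]
        bounded_lattice_zeta_flag[OF C P]) (auto simp: flag_pivots_Int of_nat_diff)
  then show ?thesis by simp
qed

end

section \<open>Subrings and ideals of a Heisenberg triple\<close>

lemma subring_pivot_bound: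
  fixes \<tau> :: int
  assumes "\<tau> \<noteq> 0" "0 < d1" "0 < d2" "0 < d3" "int d1 dvd \<tau> * int d2 * int d3"
  shows "real (d1^2 * d2) \<le> sqrt \<bar>\<tau>\<bar> * real (d1 * d2 * d3) powr (3/2)"
proof -
  have "int d1 \<le> \<bar>\<tau>\<bar> * int d2 * int d3" using dvd_imp_le_int[OF _ assms(5)] assms by (simp add: abs_mult)
  then have "real_of_int (int d1) \<le> real_of_int (\<bar>\<tau>\<bar> * int d2 * int d3)" by (simp only: of_int_le_iff)
  then have le: "real d1 \<le> \<bar>\<tau>\<bar> * real d2 * real d3" by simp
  define x where "x = real (d1 * d2 * d3)"
  have "real (d1^2 * d2) ^ 2 = real d1 * (real d1 ^ 3 * real d2 ^ 2)" by (simp add: power2_eq_square power3_eq_cube)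
  also have "\<dots> \<le> (\<bar>\<tau>\<bar> * real d2 * real d3) * (real d1 ^ 3 * real d2 ^ 2)" by (rule mult_right_mono[OF le]) simp
  also have "\<dots> \<le> (\<bar>\<tau>\<bar> * real d2 * real d3 ^ 3) * (real d1 ^ 3 * real d2 ^ 2)"
  proof (intro mult_right_mono mult_left_mono)
    have "real d3 * 1 \<le> real d3 * real d3 ^ 2" using assms(4) by (intro mult_left_mono one_le_power) auto
    then show "real d3 \<le> real d3 ^ 3" by (simp add: power3_eq_cube power2_eq_square)
  qed auto
  also have "\<dots> = \<bar>\<tau>\<bar> * x ^ 3" by (simp add: x_def power2_eq_square power3_eq_cube)
  finally have "real (d1^2 * d2) \<le> sqrt (\<bar>\<tau>\<bar> * x ^ 3)" by (rule real_le_rsqrt)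
  also have "\<dots> = sqrt \<bar>\<tau>\<bar> * x powr (3/2)"
  proof -
    have "x powr (3/2) = (x powr 3) powr (1/2)" by (simp add: powr_powr)
    also have "\<dots> = sqrt (x ^ 3)" by (simp add: x_def powr_half_sqrt)
    finally show ?thesis by (simp add: real_sqrt_mult)
  qed
  finally show ?thesis by (simp add: x_def)
qed

lemma ideal_pivot_bound:
  fixes \<tau> :: int
  assumes "\<tau> \<noteq> 0" "0 < d3" "int d1 dvd \<tau> * int d3"
  shows "real (d1^2 * d2) \<le> \<bar>\<tau>\<bar> * real (d1 * d2 * d3) powr 1"
proof -
  have "int d1 \<le> \<bar>\<tau>\<bar> * int d3" using dvd_imp_le_int[OF _ assms(3)] assms by (simp add: abs_mult)
  then have "real_of_int (int d1) \<le> real_of_int (\<bar>\<tau>\<bar> * int d3)" by (simp only: of_int_le_iff)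
  then have "real d1 \<le> \<bar>\<tau>\<bar> * real d3" by simp
  then have "real d1 * (real d1 * real d2) \<le> (\<bar>\<tau>\<bar> * real d3) * (real d1 * real d2)"
    by (rule mult_right_mono) simp
  then show ?thesis by (simp add: power2_eq_square mult_ac)
qed

lemma full_lattice_slice_pivot:
  assumes "M \<in> full_lattices UNIV" "j \<in> K"
  shows "add_subgroup (M \<inter> coord_subspace K)" "\<exists>k>0. axis j (int k) \<in> M \<inter> coord_subspace K"
    "\<exists>v\<in>M \<inter> coord_subspace K. v$j = int (pivot j (M \<inter> coord_subspace K))"
proof -
  show "add_subgroup (M \<inter> coord_subspace K)"
    using assms(1) by (simp add: full_lattices_def add_subgroup_Int add_subgroup_coord_subspace)
  show ex: "\<exists>k>0. axis j (int k) \<in> M \<inter> coord_subspace K"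
    using full_lattice_axis_multiple[OF assms(1)] axis_in_coord_subspace[OF assms(2)] by blast
  show "\<exists>v\<in>M \<inter> coord_subspace K. v$j = int (pivot j (M \<inter> coord_subspace K))"
    using pivot_spec(2)[OF ex] .
qed

context heisenberg_triple
begin

lemma lie_subring_flag_pivots:
  assumes "lie_subring B M" "M \<in> full_lattices UNIV"
  shows "case flag_pivots a b c M of (d1, d2, d3) \<Rightarrow> int d1 dvd \<tau> * int d2 * int d3"
proof -
  obtain v2 where v2: "v2 \<in> M" "v2 \<in> coord_subspace {a, b}"
      "v2$b = int (pivot b (M \<inter> coord_subspace {a, b}))"
    using full_lattice_slice_pivot(3)[OF assms(2), of b "{a, b}"] by auto
  obtain v3 where v3: "v3 \<in> M" "v3 \<in> coord_subspace {a, b, c}"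
      "v3$c = int (pivot c (M \<inter> coord_subspace {a, b, c}))"
    using full_lattice_slice_pivot(3)[OF assms(2), of c "{a, b, c}"] by auto
  have "B v2 v3 \<in> M" using assms(1) v2(1) v3(1) by (simp add: lie_subring_def)
  moreover have "B v2 v3 \<in> coord_subspace {a}"
    using bracket_flag[OF v2(2) v3(2)] by (simp add: axis_in_coord_subspace)
  ultimately have "B v2 v3 \<in> M \<inter> coord_subspace {a}" by blast
  then have "int (pivot a (M \<inter> coord_subspace {a})) dvd B v2 v3 $ a"
    using pivot_dvd full_lattice_slice_pivot[OF assms(2), of a "{a}"] by blast
  then show ?thesis using bracket_flag[OF v2(2) v3(2)] v2(3) v3(3) by (simp add: flag_pivots_def)
qed

lemma lie_ideal_flag_pivots:
  assumes "lie_ideal B M" "M \<in> full_lattices UNIV"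
  shows "case flag_pivots a b c M of (d1, d2, d3) \<Rightarrow> int d1 dvd \<tau> * int d3"
proof -
  obtain v3 where v3: "v3 \<in> M" "v3 \<in> coord_subspace {a, b, c}"
      "v3$c = int (pivot c (M \<inter> coord_subspace {a, b, c}))"
    using full_lattice_slice_pivot(3)[OF assms(2), of c "{a, b, c}"] by auto
  have b: "axis b 1 \<in> coord_subspace {a, b}" by (simp add: axis_in_coord_subspace)
  have "B (axis b 1) v3 \<in> M" using assms(1) v3(1) by (simp add: lie_ideal_def)
  moreover have "B (axis b 1) v3 \<in> coord_subspace {a}"
    using bracket_flag[OF b v3(2)] by (simp add: axis_in_coord_subspace)
  ultimately have "B (axis b 1) v3 \<in> M \<inter> coord_subspace {a}" by blast
  then have "int (pivot a (M \<inter> coord_subspace {a})) dvd B (axis b 1) v3 $ a"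
    using pivot_dvd full_lattice_slice_pivot[OF assms(2), of a "{a}"] by blast
  then show ?thesis using bracket_flag[OF b v3(2)] v3(3) by (simp add: flag_pivots_def)
qed

lemma abscissa_num_subrings_le: "abscissa (num_subrings B) \<le> ereal (real CARD('n) - 1/2)"
proof -
  let ?P = "\<lambda>(d1, d2, d3). int d1 dvd \<tau> * int d2 * int d3"
  have "abscissa (\<lambda>n. card {M. lie_subring B M \<and> add_index M = n}) \<le> ereal (real CARD('n) - 1/2)"
  proof (rule abscissa_le_of_bounded_lattice_zeta[where Q = "\<lambda>M. ?P (flag_pivots a b c M)"])
    show "M \<in> full_lattices UNIV \<and> ?P (flag_pivots a b c M)" if M: "lie_subring B M" "add_index M \<noteq> 0" for M
    proof
      show L: "M \<in> full_lattices UNIV" using M full_lattices_UNIV unfolding lie_subring_def by blast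
      show "?P (flag_pivots a b c M)" using lie_subring_flag_pivots[OF M(1) L] .
    qed
    show "bounded_lattice_zeta UNIV (\<lambda>M. ?P (flag_pivots a b c M)) s" if "real CARD('n) - 1/2 < s" for s
      using that subring_pivot_bound[OF tau]
      by (intro bounded_lattice_zeta_flag_UNIV[OF distinct, where C = "sqrt \<bar>\<tau>\<bar>" and e = "3/2"]) auto
  qed
  then show ?thesis by (simp add: num_subrings_def[abs_def])
qed

lemma abscissa_num_ideals_le: "abscissa (num_ideals B) \<le> ereal (real CARD('n) - 1)"
proof -
  let ?P = "\<lambda>(d1, d2, d3). int d1 dvd \<tau> * int d3"
  have "abscissa (\<lambda>n. card {M. lie_ideal B M \<and> add_index M = n}) \<le> ereal (real CARD('n) - 1)"
  proof (rule abscissa_le_of_bounded_lattice_zeta[where Q = "\<lambda>M. ?P (flag_pivots a b c M)"])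
    show "M \<in> full_lattices UNIV \<and> ?P (flag_pivots a b c M)" if M: "lie_ideal B M" "add_index M \<noteq> 0" for M
    proof
      show L: "M \<in> full_lattices UNIV" using M full_lattices_UNIV unfolding lie_ideal_def by blast
      show "?P (flag_pivots a b c M)" using lie_ideal_flag_pivots[OF M(1) L] .
    qed
    show "bounded_lattice_zeta UNIV (\<lambda>M. ?P (flag_pivots a b c M)) s" if "real CARD('n) - 1 < s" for s
      using that ideal_pivot_bound[OF tau]
      by (intro bounded_lattice_zeta_flag_UNIV[OF distinct, where C = "\<bar>\<tau>\<bar>" and e = 1]) auto
  qed
  then show ?thesis by (simp add: num_ideals_def[abs_def])
qed

end

theorem theorem4p3:
  fixes B :: "int^'n \<Rightarrow> int^'n \<Rightarrow> int^'n" and c :: nat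
  assumes "lie_ring B" and "\<not> abelian_lie B" and "nilpotent_class B c"
  shows "(c = 2 \<longrightarrow> abscissa (num_subrings B) \<le> ereal (real CARD('n) - 1/2))
       \<and> (c > 2 \<longrightarrow> abscissa (num_subrings B) \<le> ereal (real CARD('n) - 1 / (real c - 1)))
       \<and> abscissa (num_ideals B) \<le> ereal (real CARD('n) - 1)"
proof -
  obtain x y where xy: "B x y \<noteq> 0" "B x y \<in> center B"
    using nilpotent_central_bracket[OF assms] by blast
  obtain T and a b c' :: 'n and \<tau> where T: "bij T" "Modules.additive T"
      "heisenberg_triple (push_bracket T B) a b c' \<tau>"
    using heisenberg_normal_form[OF lie_ring_biadditive[OF assms(1)] lie_ring_alternating[OF assms(1)] xy]
    by blast
  have subrings: "abscissa (num_subrings B) \<le> ereal (real CARD('n) - 1/2)"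
    using heisenberg_triple.abscissa_num_subrings_le[OF T(3)] num_subrings_push_bracket[OF T(1,2)] by simp
  have ideals: "abscissa (num_ideals B) \<le> ereal (real CARD('n) - 1)"
    using heisenberg_triple.abscissa_num_ideals_le[OF T(3)] num_ideals_push_bracket[OF T(1,2)] by simp
  have "1 / (real c - 1) \<le> 1/2" if "c > 2" using that by (simp add: field_simps)
  then show ?thesis using subrings ideals by (auto intro: order_trans)
qed

end
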